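(* Consider the algorithm ECCom described in the context, and fix an epoch $i$. If $f_N^{i'}+f_L^{i'}\ge 1/4$, then with high probability $f_N^{i}+f_L^{i}\ge 1/6$.
   Context: Setting. A dynamic system of IDs with at least $n_0$ good IDs at all times; "with high probability" means with probability at least $1-n_0^{-c'}$ for a desired constant $c'$ (relative to a lifetime of $O(n_0^{\gamma})$ events, $\gamma\ge1$ a constant). A committee runs algorithm ECCom: it maintains $\mathcal S_{\mathrm{old}}$, the set of IDs present after the most recent purge (start of the epoch), and $\mathcal S$, the current set of IDs. It uses a hash function $h'$, unknown to the IDs and behaving as a uniformly random function to $[0,1)$, and places an ID $v$ in the sample when $h'(v)\le c\log n_0/|\mathcal S_{\mathrm{old}}|$, where $c>0$ is a sufficiently large constant depending on $\gamma$. The sample set $\mathcal S'_{\mathrm{old}}$ consists of the sampled IDs of $\mathcal S_{\mathrm{old}}$ at the start of the epoch; the current sample set $\mathcal S'$ consists of the sampled IDs currently present. A purge is triggered when $|(\mathcal S'\cup\mathcal S'_{\mathrm{old}})\setminus(\mathcal S'\cap\mathcal S'_{\mathrm{old}})|\ge|\mathcal S'_{\mathrm{old}}|/4$. Notation. For epoch $i$: $f_N^i$ is the fraction (relative to $|\mathcal S_{\mathrm{old}}|$) of IDs that joined during the epoch and remain active, and $f_L^i$ is the fraction of IDs of $\mathcal S_{\mathrm{old}}$ that have left; $f_N^{i'}$ and $f_L^{i'}$ are the corresponding fractions for the sample sets (relative to $|\mathcal S'_{\mathrm{old}}|$). *)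

theory Defs
  imports "HOL-Probability.Probability"
begin

text \<open>Model of one epoch of ECCom. \<open>S_old\<close> is the set of IDs at the start of the epoch,
  \<open>S\<close> is the current set of IDs at some moment of the epoch.\<close>

definition samp_thr :: "real \<Rightarrow> nat \<Rightarrow> 'a set \<Rightarrow> real" where
  "samp_thr c n0 S_old = c * ln (real n0) / real (card S_old)"

definition sampled :: "real \<Rightarrow> nat \<Rightarrow> 'a set \<Rightarrow> ('a \<Rightarrow> real) \<Rightarrow> 'a set \<Rightarrow> 'a set" where
  "sampled c n0 S_old h A = {v \<in> A. h v \<le> samp_thr c n0 S_old}"

definition fN :: "'a set \<Rightarrow> 'a set \<Rightarrow> real" where
  "fN S_old S = real (card (S - S_old)) / real (card S_old)"

definition fL :: "'a set \<Rightarrow> 'a set \<Rightarrow> real" where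
  "fL S_old S = real (card (S_old - S)) / real (card S_old)"

definition fN' :: "real \<Rightarrow> nat \<Rightarrow> 'a set \<Rightarrow> ('a \<Rightarrow> real) \<Rightarrow> 'a set \<Rightarrow> real" where
  "fN' c n0 S_old h S =
     real (card (sampled c n0 S_old h S - sampled c n0 S_old h S_old))
       / real (card (sampled c n0 S_old h S_old))"

definition fL' :: "real \<Rightarrow> nat \<Rightarrow> 'a set \<Rightarrow> ('a \<Rightarrow> real) \<Rightarrow> 'a set \<Rightarrow> real" where
  "fL' c n0 S_old h S =
     real (card (sampled c n0 S_old h S_old - sampled c n0 S_old h S))
       / real (card (sampled c n0 S_old h S_old))"

definition hash_space :: "'a set \<Rightarrow> ('a \<Rightarrow> real) measure" where
  "hash_space U = PiM U (\<lambda>_. uniform_measure lborel {0..<1::real})"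

end

theory Submission
  imports Defs
begin

text \<open>Fix a moment of the epoch at which the true churn is below 1/6 but the sample churn
  is at least 1/4. Among the sampled IDs, the stayers are then at most three times the leavers
  plus four times the joiners, i.e. the sampled IDs carry a nonnegative total of the weights
  -1 (stayer), 3 (leaver), 4 (joiner). Each ID is sampled independently with probability
  q \<ge> min p 1, where p = c ln n0 / |S_old|, so the exponential moment bound with exponent
  1/20 makes this event at most exp(q \<Sum>(e^(w/20) - 1)), and since stayers dominate when
  the true churn is small this is at most exp(-q |S_old| / 200) \<le> n0^(-c/200). A union
  bound over the T \<le> K n0^\<gamma> moments finishes once c \<ge> 200 (\<gamma> + c' + 1).\<close>

lemma pred_sample_event:
  assumes "finite U" and "A \<in> sets M"
  shows "Measurable.pred (PiM U (\<lambda>_. M)) (\<lambda>h. Q {v\<in>U. h v \<in> A})"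
proof -
  have comp: "Measurable.pred (PiM U (\<lambda>_. M)) (\<lambda>h. h v \<in> A)" if "v \<in> U" for v
    by (rule pred_sets2[OF assms(2) measurable_component_singleton[OF that]])
  \<comment> \<open>the sample set is one of the finitely many subsets of U\<close>
  have "Measurable.pred (PiM U (\<lambda>_. M)) (\<lambda>h. \<exists>W\<in>Pow U. Q W \<and> (\<forall>v\<in>U. h v \<in> A \<longleftrightarrow> v \<in> W))"
    using assms(1) by (intro pred_intros_finite pred_intros_logic comp measurable_const) auto
  moreover have "(\<exists>W\<in>Pow U. Q W \<and> (\<forall>v\<in>U. h v \<in> A \<longleftrightarrow> v \<in> W)) \<longleftrightarrow> Q {v\<in>U. h v \<in> A}" for h
  proof
    assume "\<exists>W\<in>Pow U. Q W \<and> (\<forall>v\<in>U. h v \<in> A \<longleftrightarrow> v \<in> W)"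
    then obtain W where "W \<subseteq> U" "Q W" "\<forall>v\<in>U. h v \<in> A \<longleftrightarrow> v \<in> W" by auto
    then have "{v\<in>U. h v \<in> A} = W" by auto
    with \<open>Q W\<close> show "Q {v\<in>U. h v \<in> A}" by simp
  qed auto
  ultimately show ?thesis by simp
qed

lemma (in prob_space) nn_integral_exp_indicator_weight:
  assumes "A \<in> events"
  shows "(\<integral>\<^sup>+x. ennreal (exp (l * (if x \<in> A then w else 0))) \<partial>M)
     = ennreal (exp (l * w) * prob A + (1 - prob A))"
proof -
  have "(\<integral>\<^sup>+x. ennreal (exp (l * (if x \<in> A then w else 0))) \<partial>M)
     = (\<integral>\<^sup>+x. ennreal (exp (l * w)) * indicator A x + indicator (space M - A) x \<partial>M)"
    by (intro nn_integral_cong) (auto simp: indicator_def)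
  also have "\<dots> = ennreal (exp (l * w)) * emeasure M A + emeasure M (space M - A)"
    using assms by (subst nn_integral_add) (auto simp: nn_integral_cmult_indicator)
  also have "\<dots> = ennreal (exp (l * w) * prob A + (1 - prob A))"
    using assms prob_le_1[of A] by (simp add: emeasure_eq_measure prob_compl ennreal_mult)
  finally show ?thesis .
qed

lemma (in prob_space) emeasure_sample_weight_nonneg_le:
  fixes w :: "'i \<Rightarrow> real"
  assumes "finite U" and "A \<in> events" and "0 \<le> l"
  shows "emeasure (PiM U (\<lambda>_. M)) {h \<in> space (PiM U (\<lambda>_. M)). 0 \<le> (\<Sum>v\<in>{v\<in>U. h v \<in> A}. w v)}
    \<le> ennreal (exp (prob A * (\<Sum>v\<in>U. exp (l * w v) - 1)))"
proof -
  interpret product_sigma_finite "\<lambda>_::'i. M"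
    by (simp add: product_sigma_finite_def sigma_finite_measure_axioms)
  let ?P = "PiM U (\<lambda>_. M)"
  let ?E = "{h \<in> space ?P. 0 \<le> (\<Sum>v\<in>{v\<in>U. h v \<in> A}. w v)}"
  define f where "f = (\<lambda>v x. ennreal (exp (l * (if x \<in> A then w v else 0))))"
  have E_sets: "?E \<in> sets ?P"
    using pred_sample_event[OF assms(1,2), of "\<lambda>W. 0 \<le> sum w W"] by (simp add: pred_def)
  have indicator_le: "indicator ?E h \<le> (\<Prod>v\<in>U. f v (h v))" for h
  proof -
    have "(\<Prod>v\<in>U. f v (h v)) = ennreal (exp (l * (\<Sum>v\<in>U. if h v \<in> A then w v else 0)))"
      using assms(1) by (simp add: f_def prod_ennreal exp_sum sum_distrib_left)
    moreover have "(\<Sum>v\<in>U. if h v \<in> A then w v else 0) = (\<Sum>v\<in>{v\<in>U. h v \<in> A}. w v)"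
      using assms(1) by (simp add: sum.inter_filter)
    ultimately show ?thesis
      using assms(3) by (auto simp: indicator_def)
  qed
  have "emeasure ?P ?E = (\<integral>\<^sup>+h. indicator ?E h \<partial>?P)"
    using E_sets by simp
  also have "\<dots> \<le> (\<integral>\<^sup>+h. (\<Prod>v\<in>U. f v (h v)) \<partial>?P)"
    by (intro nn_integral_mono indicator_le)
  also have "\<dots> = (\<Prod>v\<in>U. integral\<^sup>N M (f v))"
    using assms(1,2) by (intro product_nn_integral_prod) (auto simp: f_def)
  also have "\<dots> = (\<Prod>v\<in>U. ennreal (exp (l * w v) * prob A + (1 - prob A)))"
    by (simp only: f_def nn_integral_exp_indicator_weight[OF assms(2)])
  also have "\<dots> = ennreal (\<Prod>v\<in>U. exp (l * w v) * prob A + (1 - prob A))"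
    using prob_le_1[of A] by (intro prod_ennreal) simp
  also have "\<dots> \<le> ennreal (\<Prod>v\<in>U. exp (prob A * (exp (l * w v) - 1)))"
  proof (intro ennreal_leI prod_mono conjI)
    fix v
    show "0 \<le> exp (l * w v) * prob A + (1 - prob A)"
      using prob_le_1[of A] by simp
    show "exp (l * w v) * prob A + (1 - prob A) \<le> exp (prob A * (exp (l * w v) - 1))"
      using exp_ge_add_one_self[of "prob A * (exp (l * w v) - 1)"] by (simp add: algebra_simps)
  qed
  also have "\<dots> = ennreal (exp (prob A * (\<Sum>v\<in>U. exp (l * w v) - 1)))"
    using assms(1) by (simp add: exp_sum sum_distrib_left)
  finally show ?thesis .
qed

abbreviation unif01 :: "real measure" where
  "unif01 \<equiv> uniform_measure lborel {0..<1::real}"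

lemma prob_space_unif01: "prob_space unif01"
  by (rule prob_space_uniform_measure) auto

lemma prob_space_hash_space: "prob_space (hash_space U)"
  unfolding hash_space_def by (intro prob_space_PiM prob_space_unif01)

lemma measure_unif01_atMost_ge:
  assumes "0 \<le> p"
  shows "min p 1 \<le> measure unif01 {..p}"
proof -
  interpret prob_space unif01 by (rule prob_space_unif01)
  have "emeasure unif01 {..p} = emeasure lborel ({0..<1} \<inter> {..p})"
    by (subst emeasure_uniform_measure) (auto simp: divide_ennreal_def)
  also have "\<dots> \<ge> emeasure lborel {0..<min p 1}"
    by (intro emeasure_mono) auto
  finally show ?thesis
    using assms by (simp add: emeasure_eq_measure)
qed

lemma sampled_eq_Int:
  assumes "A \<subseteq> U"
  shows "sampled c n0 S_old h A = A \<inter> {v\<in>U. h v \<in> {..samp_thr c n0 S_old}}"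
  using assms by (auto simp: sampled_def)

lemma sets_sample_churn_event:
  assumes "finite U" and "S_old \<subseteq> U" and "S1 \<subseteq> U"
  shows "{h \<in> space (hash_space U). P (fN' c n0 S_old h S1 + fL' c n0 S_old h S1)}
    \<in> sets (hash_space U)"
proof -
  define Q where "Q W \<longleftrightarrow> P (real (card (S1 \<inter> W - S_old \<inter> W)) / real (card (S_old \<inter> W))
    + real (card (S_old \<inter> W - S1 \<inter> W)) / real (card (S_old \<inter> W)))" for W
  have "Measurable.pred (hash_space U) (\<lambda>h. Q {v\<in>U. h v \<in> {..samp_thr c n0 S_old}})"
    unfolding hash_space_def using assms(1) by (intro pred_sample_event) auto
  then show ?thesis
    by (simp add: pred_def Q_def fN'_def fL'_def
        sampled_eq_Int[OF assms(2)] sampled_eq_Int[OF assms(3)])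
qed

definition churn_weight :: "'a set \<Rightarrow> 'a set \<Rightarrow> 'a \<Rightarrow> real" where
  "churn_weight S0 S1 v =
     (if v \<in> S0 then if v \<in> S1 then -1 else 3 else if v \<in> S1 then 4 else 0)"

lemma sum_churn_weight:
  fixes f :: "real \<Rightarrow> real"
  assumes "finite W" and "f 0 = 0"
  shows "(\<Sum>v\<in>W. f (churn_weight S0 S1 v)) =
    f 3 * card (W \<inter> (S0 - S1)) + f 4 * card (W \<inter> (S1 - S0)) + f (-1) * card (W \<inter> S0 \<inter> S1)"
proof -
  have "f (churn_weight S0 S1 v) =
      f 3 * of_bool (v \<in> S0 - S1) + f 4 * of_bool (v \<in> S1 - S0)
        + f (-1) * of_bool (v \<in> S0 \<inter> S1)" for v
    using assms(2) by (simp add: churn_weight_def)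
  then show ?thesis
    using assms(1) by (simp add: sum.distrib flip: sum_distrib_left) (simp add: set_diff_eq Int_def)
qed

lemma card_Int_le_of_churn_ratio_ge:
  assumes "finite X0"
    and "1/4 \<le> real (card (X1 - X0)) / card X0 + real (card (X0 - X1)) / card X0"
  shows "card (X0 \<inter> X1) \<le> 3 * card (X0 - X1) + 4 * card (X1 - X0)"
proof -
  have "0 < card X0"
    using assms(2) by (auto intro: gr0I)
  then have "real (card X0) \<le> 4 * (real (card (X1 - X0)) + real (card (X0 - X1)))"
    using assms(2) by (simp add: field_simps flip: add_divide_distrib)
  moreover have "card X0 = card (X0 - X1) + card (X0 \<inter> X1)"
    using card_Int_Diff[OF assms(1), of X1] by linarith
  ultimately have "real (card (X0 \<inter> X1)) \<le> real (3 * card (X0 - X1) + 4 * card (X1 - X0))"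
    by simp
  then show ?thesis
    by (simp only: of_nat_le_iff)
qed

lemma churn_exp_moment_le:
  assumes "finite U" and "S0 \<subseteq> U" and "S1 \<subseteq> U"
    and small: "real (card (S1 - S0)) + real (card (S0 - S1)) < card S0 / 6"
  shows "(\<Sum>v\<in>U. exp (1/20 * churn_weight S0 S1 v) - 1) \<le> - card S0 / 200"
proof -
  define a b i where "a = real (card (S0 - S1))" and "b = real (card (S1 - S0))"
    and "i = real (card (S0 \<inter> S1))"
  have "card S0 = card (S0 \<inter> S1) + card (S0 - S1)"
    using assms(1,2) by (intro card_Int_Diff) (rule finite_subset)
  then have i: "i = card S0 - a"
    by (simp add: a_def i_def)
  have "exp (3/20::real) \<le> 1 + 3/20 + (3/20)^2" and "exp (4/20::real) \<le> 1 + 4/20 + (4/20)^2"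
    by (rule exp_bound, simp, simp)+
  then have e3: "exp (3/20) - 1 \<le> (69/400::real)" and e4: "exp (4/20) - 1 \<le> (6/25::real)"
    by (simp_all add: power2_eq_square)
  have "(exp (3/20) - 1) * a \<le> 69/400 * a"
    using e3 by (rule mult_right_mono) (simp add: a_def)
  moreover have "(exp (4/20) - 1) * b \<le> 6/25 * b"
    using e4 by (rule mult_right_mono) (simp add: b_def)
  moreover have "(exp (-1/20) - 1) * i \<le> -1/21 * i"
  proof (rule mult_right_mono)
    have "1 + 1/20 \<le> exp (1/20::real)"
      by (rule exp_ge_add_one_self)
    then show "exp (-1/20) - 1 \<le> (-1/21::real)"
      by (simp add: exp_minus field_simps)
  qed (simp add: i_def)
  moreover have "(\<Sum>v\<in>U. exp (1/20 * churn_weight S0 S1 v) - 1) =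
      (exp (3/20) - 1) * a + (exp (4/20) - 1) * b + (exp (-1/20) - 1) * i"
  proof -
    have "U \<inter> (S0 - S1) = S0 - S1" "U \<inter> (S1 - S0) = S1 - S0" "U \<inter> S0 \<inter> S1 = S0 \<inter> S1"
      using assms(2,3) by auto
    then show ?thesis
      using sum_churn_weight[OF assms(1), of "\<lambda>x. exp (1/20 * x) - 1"]
      by (simp add: a_def b_def i_def)
  qed
  ultimately show ?thesis
    using small i unfolding a_def b_def by linarith
qed

lemma churn_weight_sum_nonneg:
  assumes "finite W"
    and "1/4 \<le> real (card (S1 \<inter> W - S0 \<inter> W)) / card (S0 \<inter> W)
              + real (card (S0 \<inter> W - S1 \<inter> W)) / card (S0 \<inter> W)"
  shows "0 \<le> (\<Sum>v\<in>W. churn_weight S0 S1 v)"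
proof -
  have "card (S0 \<inter> W \<inter> (S1 \<inter> W)) \<le> 3 * card (S0 \<inter> W - S1 \<inter> W) + 4 * card (S1 \<inter> W - S0 \<inter> W)"
    using assms by (intro card_Int_le_of_churn_ratio_ge) auto
  moreover have "S0 \<inter> W \<inter> (S1 \<inter> W) = W \<inter> S0 \<inter> S1" "S0 \<inter> W - S1 \<inter> W = W \<inter> (S0 - S1)"
    "S1 \<inter> W - S0 \<inter> W = W \<inter> (S1 - S0)"
    by auto
  ultimately show ?thesis
    using sum_churn_weight[OF assms(1), of "\<lambda>x. x"] by simp
qed

lemma emeasure_sample_churn_le:
  assumes "finite U" and "S_old \<subseteq> U" and "S1 \<subseteq> U" and "S_old \<noteq> {}"
    and "fN S_old S1 + fL S_old S1 < 1/6"
  shows "emeasure (hash_space U)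
      {h \<in> space (hash_space U). 1/4 \<le> fN' c n0 S_old h S1 + fL' c n0 S_old h S1}
    \<le> ennreal (exp (- (measure unif01 {..samp_thr c n0 S_old} * card S_old / 200)))"
proof -
  interpret prob_space unif01
    by (rule prob_space_unif01)
  let ?A = "{..samp_thr c n0 S_old}"
  let ?q = "measure unif01 ?A"
  have "0 < card S_old"
    using assms(1,2,4) by (simp add: card_gt_0_iff finite_subset)
  then have small: "real (card (S1 - S_old)) + real (card (S_old - S1)) < card S_old / 6"
    using assms(5) by (simp add: fN_def fL_def field_simps flip: add_divide_distrib)
  have "emeasure (hash_space U)
      {h \<in> space (hash_space U). 1/4 \<le> fN' c n0 S_old h S1 + fL' c n0 S_old h S1}
    \<le> emeasure (PiM U (\<lambda>_. unif01))
      {h \<in> space (PiM U (\<lambda>_. unif01)). 0 \<le> (\<Sum>v\<in>{v\<in>U. h v \<in> ?A}. churn_weight S_old S1 v)}"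
    unfolding hash_space_def
    using pred_sample_event[OF assms(1), of ?A unif01 "\<lambda>W. 0 \<le> sum (churn_weight S_old S1) W"]
    by (intro emeasure_mono)
       (auto intro!: churn_weight_sum_nonneg simp: assms(1) hash_space_def fN'_def fL'_def
             sampled_eq_Int[OF assms(2)] sampled_eq_Int[OF assms(3)])
  also have "\<dots> \<le> ennreal (exp (?q * (\<Sum>v\<in>U. exp (1/20 * churn_weight S_old S1 v) - 1)))"
    using assms(1) by (intro emeasure_sample_weight_nonneg_le) auto
  also have "\<dots> \<le> ennreal (exp (- (?q * card S_old / 200)))"
  proof (intro ennreal_leI exp_mono)
    have "?q * (\<Sum>v\<in>U. exp (1/20 * churn_weight S_old S1 v) - 1) \<le> ?q * (- card S_old / 200)"
      using churn_exp_moment_le[OF assms(1-3) small] by (rule mult_left_mono) simp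
    then show "?q * (\<Sum>v\<in>U. exp (1/20 * churn_weight S_old S1 v) - 1) \<le> - (?q * card S_old / 200)"
      by linarith
  qed
  finally show ?thesis .
qed

lemma samp_thr_mass_ge:
  assumes "0 < c" and "1 \<le> n0" and "n0 \<le> card S_old" and "c * ln n0 \<le> n0"
  shows "c * ln n0 \<le> measure unif01 {..samp_thr c n0 S_old} * card S_old"
proof -
  define p where "p = samp_thr c n0 S_old"
  have card_pos: "0 < real (card S_old)"
    using assms(2,3) by simp
  have p_card: "p * card S_old = c * ln n0"
    using card_pos by (simp add: p_def samp_thr_def)
  have "0 \<le> p"
    using assms(1,2) by (simp add: p_def samp_thr_def)
  then have "min p 1 * card S_old \<le> measure unif01 {..p} * card S_old"
    by (intro mult_right_mono measure_unif01_atMost_ge) simp_all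
  moreover have "c * ln n0 \<le> min p 1 * card S_old"
    using p_card assms(3,4) by (cases "p \<le> 1") auto
  ultimately show ?thesis
    by (simp add: p_def)
qed

lemma epoch_failure_prob_le:
  assumes "finite U" and "S_old \<subseteq> U" and "S1 \<subseteq> U"
    and "0 < c" and "1 \<le> n0" and "n0 \<le> card S_old" and "c * ln n0 \<le> n0"
  shows "measure (hash_space U) {h \<in> space (hash_space U).
      1/4 \<le> fN' c n0 S_old h S1 + fL' c n0 S_old h S1 \<and> fN S_old S1 + fL S_old S1 < 1/6}
    \<le> n0 powr (-c/200)"
proof (cases "fN S_old S1 + fL S_old S1 < 1/6")
  case True
  interpret prob_space "hash_space U"
    by (rule prob_space_hash_space)
  have "S_old \<noteq> {}"
    using assms(5,6) by auto
  then have "emeasure (hash_space U)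
      {h \<in> space (hash_space U). 1/4 \<le> fN' c n0 S_old h S1 + fL' c n0 S_old h S1}
    \<le> ennreal (exp (- (measure unif01 {..samp_thr c n0 S_old} * card S_old / 200)))"
    using True by (intro emeasure_sample_churn_le assms(1-3))
  also have "\<dots> \<le> ennreal (exp (- (c * ln n0) / 200))"
    using samp_thr_mass_ge[OF assms(4-7)] by (intro ennreal_leI) simp
  also have "exp (- (c * ln n0) / 200) = n0 powr (-c/200)"
    using assms(5) by (simp add: powr_def)
  finally show ?thesis
    using True by (simp add: emeasure_eq_measure)
qed simp

lemma mult_ln_le_of_sq_le:
  fixes c x :: real
  assumes "0 \<le> c" and "0 < x" and "4 * c^2 \<le> x"
  shows "c * ln x \<le> x"
proof -
  have "2 * c \<le> sqrt x"
    using assms by (simp add: real_le_rsqrt power_mult_distrib)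
  have "ln x = 2 * ln (sqrt x)"
    using assms(2) by (simp add: ln_sqrt)
  also have "\<dots> \<le> 2 * sqrt x"
    using ln_le_minus_one[of "sqrt x"] assms(2) by simp
  finally have "c * ln x \<le> c * (2 * sqrt x)"
    using assms(1) by (rule mult_left_mono)
  also have "\<dots> = (2 * c) * sqrt x"
    by simp
  also have "\<dots> \<le> sqrt x * sqrt x"
    using \<open>2 * c \<le> sqrt x\<close> assms(2) by (intro mult_right_mono) auto
  finally show ?thesis
    using assms(2) by simp
qed

lemma mult_powr_le_powr:
  fixes x K T a b d :: real
  assumes "1 \<le> x" and "K \<le> x" and "T \<le> K * x powr a" and "a + b \<le> d - 1"
  shows "T * x powr b \<le> x powr d"
proof -
  have "T * x powr b \<le> K * x powr a * x powr b"
    using assms(3) by (rule mult_right_mono) simp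
  also have "\<dots> = K * x powr (a + b)"
    by (simp add: powr_add)
  also have "\<dots> \<le> x * x powr (a + b)"
    using assms(2) by (rule mult_right_mono) simp
  also have "\<dots> = x powr (a + b + 1)"
    using assms(1) by (simp add: powr_add)
  also have "\<dots> \<le> x powr d"
    using assms(1,4) by (intro powr_mono) auto
  finally show ?thesis .
qed

lemma epoch_failures_measure_le:
  fixes S :: "nat \<Rightarrow> 'a set" and n0 T :: nat
  assumes "finite S_old" and "\<forall>t<T. finite (S t)"
    and "0 < c" and "1 \<le> n0" and "n0 \<le> card S_old" and "c * ln n0 \<le> n0"
    and "real T * n0 powr (-c/200) \<le> B"
  shows "let U = S_old \<union> (\<Union>t<T. S t);
          E = {h \<in> space (hash_space U). \<exists>t<T.
                 fN' c n0 S_old h (S t) + fL' c n0 S_old h (S t) \<ge> 1/4 \<and>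
                 fN S_old (S t) + fL S_old (S t) < 1/6}
      in E \<in> sets (hash_space U) \<and> measure (hash_space U) E \<le> B"
proof -
  define U where "U = S_old \<union> (\<Union>t<T. S t)"
  define F where "F t = {h \<in> space (hash_space U).
      1/4 \<le> fN' c n0 S_old h (S t) + fL' c n0 S_old h (S t) \<and> fN S_old (S t) + fL S_old (S t) < 1/6}"
    for t
  interpret prob_space "hash_space U"
    by (rule prob_space_hash_space)
  have U: "finite U" "S_old \<subseteq> U" "\<And>t. t < T \<Longrightarrow> S t \<subseteq> U"
    using assms(1,2) by (auto simp: U_def)
  have F_sets: "F t \<in> events" if "t < T" for t
    unfolding F_def using sets_sample_churn_event[OF U(1,2) U(3)[OF that],
        where P = "\<lambda>x. 1/4 \<le> x \<and> fN S_old (S t) + fL S_old (S t) < 1/6"] .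
  have "prob (\<Union>t<T. F t) \<le> (\<Sum>t<T. prob (F t))"
    using F_sets by (intro finite_measure_subadditive_finite) auto
  also have "\<dots> \<le> (\<Sum>t<T. n0 powr (-c/200))"
    unfolding F_def by (intro sum_mono epoch_failure_prob_le U assms(3-6)) auto
  also have "\<dots> \<le> B"
    using assms(7) by simp
  moreover have "{h \<in> space (hash_space U). \<exists>t<T.
                 fN' c n0 S_old h (S t) + fL' c n0 S_old h (S t) \<ge> 1/4 \<and>
                 fN S_old (S t) + fL S_old (S t) < 1/6} = (\<Union>t<T. F t)"
    by (auto simp: F_def)
  ultimately show ?thesis
    using F_sets unfolding Let_def U_def[symmetric] by auto
qed

theorem lemma6:
  fixes \<gamma> c' K :: real
  assumes "\<gamma> \<ge> 1" and "c' > 0" and "K > 0"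
  shows "\<exists>c0>0. \<forall>c\<ge>c0. \<exists>N0::nat. \<forall>n0\<ge>N0. \<forall>(S_old :: 'a set) (S :: nat \<Rightarrow> 'a set) (T :: nat).
     finite S_old \<longrightarrow> card S_old \<ge> n0 \<longrightarrow> (\<forall>t<T. finite (S t) \<and> card (S t) \<ge> n0) \<longrightarrow>
     real T \<le> K * real n0 powr \<gamma> \<longrightarrow>
     (let U = S_old \<union> (\<Union>t<T. S t);
          E = {h \<in> space (hash_space U). \<exists>t<T.
                 fN' c n0 S_old h (S t) + fL' c n0 S_old h (S t) \<ge> 1/4 \<and>
                 fN S_old (S t) + fL S_old (S t) < 1/6}
      in E \<in> sets (hash_space U) \<and> measure (hash_space U) E \<le> real n0 powr (-c'))"
proof -
  define c0 where "c0 = 200 * (\<gamma> + c' + 1)"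
  have large_n0: "1 \<le> n0 \<and> K \<le> n0 \<and> c * ln n0 \<le> n0"
    if "0 < c" and "nat \<lceil>4 * c^2 + K\<rceil> + 2 \<le> n0" for c and n0 :: nat
  proof -
    have n0: "4 * c^2 + K \<le> n0"
      using that(2) by linarith
    then have "K \<le> n0"
      using zero_le_power2[of c] by linarith
    moreover have "c * ln n0 \<le> n0"
      using n0 that assms(3) by (intro mult_ln_le_of_sq_le) auto
    ultimately show ?thesis
      using that(2) by auto
  qed
  show ?thesis
    apply (intro exI[of _ c0] conjI allI impI)
    subgoal
      using assms by (simp add: c0_def)
    subgoal premises c_ge for c
    proof -
      have "0 < c"
        using c_ge assms by (simp add: c0_def)
      then show ?thesis
        using large_n0[of c] c_ge
        by (intro exI[of _ "nat \<lceil>4 * c^2 + K\<rceil> + 2"] allI impI epoch_failures_measure_le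
            mult_powr_le_powr) (auto simp: c0_def)
    qed
    done
qed

end
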